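(* Let $P$ be a rooted forest on $[n]$ with natural labeling and let $\mathcal{M}^{\hat\partial}$ be the monoid of maps $\mathcal{L}(P)\to\mathcal{L}(P)$ generated by $\hat\partial_1,\dots,\hat\partial_n$. For every $x\in\mathcal{M}^{\hat\partial}$, the set $I_x$ is an upper set of $P$; more precisely, $I_x=\operatorname{Rfactor}(e)$ for some idempotent $e\in\mathcal{M}^{\hat\partial}$.
   Context: A rooted forest is a disjoint union of rooted trees, a rooted tree being a connected finite poset in which each element is covered by at most one element. $\mathcal{L}(P)=\{\pi\in S_n : i\prec j \Rightarrow \pi^{-1}_i<\pi^{-1}_j\}$ in one-line notation. $\pi\tau_i$ ($1\le i<n$) swaps $\pi_i,\pi_{i+1}$ if incomparable and is $\pi$ otherwise; $\partial_j=\tau_j\cdots\tau_{n-1}$; $\pi\hat\partial_i=\pi\partial_{\pi^{-1}_i}$. Maps act on the right, $\pi(xy)=(\pi x)y$; the monoid contains the identity. $\operatorname{im}(x)=\{\pi x:\pi\in\mathcal{L}(P)\}$; $\operatorname{rfactor}(x)$ is the longest word that is a common suffix of all elements of $\operatorname{im}(x)$; $\operatorname{Rfactor}(x)$ is its set of letters; $I_x=\{i\in[n]:\hat\partial_i x=x\}$. An upper set $S$ satisfies $a\in S,\ b\succeq a\Rightarrow b\in S$. *)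

theory Defs
  imports Main "HOL-Library.Sublist"
begin

definition poset_on :: "nat \<Rightarrow> (nat \<Rightarrow> nat \<Rightarrow> bool) \<Rightarrow> bool" where
  "poset_on n le \<longleftrightarrow>
     (\<forall>a b. le a b \<longrightarrow> a \<in> {1..n} \<and> b \<in> {1..n}) \<and>
     (\<forall>a\<in>{1..n}. le a a) \<and>
     (\<forall>a b. le a b \<longrightarrow> le b a \<longrightarrow> a = b) \<and>
     (\<forall>a b c. le a b \<longrightarrow> le b c \<longrightarrow> le a c)"

definition strict :: "(nat \<Rightarrow> nat \<Rightarrow> bool) \<Rightarrow> nat \<Rightarrow> nat \<Rightarrow> bool" where
  "strict le a b \<longleftrightarrow> le a b \<and> a \<noteq> b"

definition covers :: "(nat \<Rightarrow> nat \<Rightarrow> bool) \<Rightarrow> nat \<Rightarrow> nat \<Rightarrow> bool" where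
  "covers le a b \<longleftrightarrow> strict le a b \<and> \<not> (\<exists>c. strict le a c \<and> strict le c b)"

definition rooted_forest :: "nat \<Rightarrow> (nat \<Rightarrow> nat \<Rightarrow> bool) \<Rightarrow> bool" where
  "rooted_forest n le \<longleftrightarrow> poset_on n le \<and>
     (\<forall>a\<in>{1..n}. \<forall>b c. covers le a b \<longrightarrow> covers le a c \<longrightarrow> b = c)"

definition natural_labeling :: "nat \<Rightarrow> (nat \<Rightarrow> nat \<Rightarrow> bool) \<Rightarrow> bool" where
  "natural_labeling n le \<longleftrightarrow> (\<forall>i j. strict le i j \<longrightarrow> i < j)"

definition comparable :: "(nat \<Rightarrow> nat \<Rightarrow> bool) \<Rightarrow> nat \<Rightarrow> nat \<Rightarrow> bool" where
  "comparable le a b \<longleftrightarrow> le a b \<or> le b a"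

text \<open>Permutations in one-line notation are lists; list index k (0-based) is position k+1.\<close>
definition lin_ext :: "nat \<Rightarrow> (nat \<Rightarrow> nat \<Rightarrow> bool) \<Rightarrow> nat list set" where
  "lin_ext n le = {\<pi>. length \<pi> = n \<and> distinct \<pi> \<and> set \<pi> = {1..n} \<and>
      (\<forall>k l. k < n \<longrightarrow> l < n \<longrightarrow> strict le (\<pi> ! k) (\<pi> ! l) \<longrightarrow> k < l)}"

text \<open>1-based position of letter i in \<pi>, i.e. \<pi>^{-1}_i.\<close>
definition posn :: "nat list \<Rightarrow> nat \<Rightarrow> nat" where
  "posn \<pi> i = (THE k. k < length \<pi> \<and> \<pi> ! k = i) + 1"

text \<open>\<pi>\<tau>_i (1-based i): swap \<pi>_i, \<pi>_{i+1} if incomparable.\<close>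
definition tau :: "(nat \<Rightarrow> nat \<Rightarrow> bool) \<Rightarrow> nat \<Rightarrow> nat list \<Rightarrow> nat list" where
  "tau le i \<pi> = (if 1 \<le> i \<and> i < length \<pi> \<and> \<not> comparable le (\<pi> ! (i - 1)) (\<pi> ! i)
                  then \<pi>[i - 1 := \<pi> ! i, i := \<pi> ! (i - 1)] else \<pi>)"

text \<open>\<pi>\<partial>_j = \<pi>\<tau>_j\<tau>_{j+1}...\<tau>_{n-1} (right action: \<tau>_j applied first).\<close>
definition pd :: "nat \<Rightarrow> (nat \<Rightarrow> nat \<Rightarrow> bool) \<Rightarrow> nat \<Rightarrow> nat list \<Rightarrow> nat list" where
  "pd n le j \<pi> = fold (tau le) [j..<n] \<pi>"

definition hatd :: "nat \<Rightarrow> (nat \<Rightarrow> nat \<Rightarrow> bool) \<Rightarrow> nat \<Rightarrow> nat list \<Rightarrow> nat list" where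
  "hatd n le i \<pi> = pd n le (posn \<pi> i) \<pi>"

text \<open>Monoid generated by hatd_1..hatd_n (maps act on the right: \<pi>(x y) = (\<pi> x) y,
  so the product x\<cdot>hatd_i is the function hatd_i \<circ> x).\<close>
inductive_set hatd_monoid :: "nat \<Rightarrow> (nat \<Rightarrow> nat \<Rightarrow> bool) \<Rightarrow> (nat list \<Rightarrow> nat list) set"
  for n le where
  idI: "id \<in> hatd_monoid n le"
| stepI: "x \<in> hatd_monoid n le \<Longrightarrow> i \<in> {1..n} \<Longrightarrow> (hatd n le i \<circ> x) \<in> hatd_monoid n le"

definition im :: "nat \<Rightarrow> (nat \<Rightarrow> nat \<Rightarrow> bool) \<Rightarrow> (nat list \<Rightarrow> nat list) \<Rightarrow> nat list set" where
  "im n le x = x ` lin_ext n le"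

definition rfactor :: "nat \<Rightarrow> (nat \<Rightarrow> nat \<Rightarrow> bool) \<Rightarrow> (nat list \<Rightarrow> nat list) \<Rightarrow> nat list" where
  "rfactor n le x = (THE w. (\<forall>v\<in>im n le x. suffix w v) \<and>
      (\<forall>w'. (\<forall>v\<in>im n le x. suffix w' v) \<longrightarrow> length w' \<le> length w))"

definition Rfactor :: "nat \<Rightarrow> (nat \<Rightarrow> nat \<Rightarrow> bool) \<Rightarrow> (nat list \<Rightarrow> nat list) \<Rightarrow> nat set" where
  "Rfactor n le x = set (rfactor n le x)"

text \<open>I_x = {i. \<hat>\<partial>_i x = x}, equality of maps on L(P); (\<hat>\<partial>_i x) applies \<hat>\<partial>_i first.\<close>
definition I_set :: "nat \<Rightarrow> (nat \<Rightarrow> nat \<Rightarrow> bool) \<Rightarrow> (nat list \<Rightarrow> nat list) \<Rightarrow> nat set" where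
  "I_set n le x = {i \<in> {1..n}. \<forall>\<pi>\<in>lin_ext n le. x (hatd n le i \<pi>) = x \<pi>}"

definition idempotent_on :: "nat list set \<Rightarrow> (nat list \<Rightarrow> nat list) \<Rightarrow> bool" where
  "idempotent_on L e \<longleftrightarrow> (\<forall>\<pi>\<in>L. e (e \<pi>) = e \<pi>)"

definition upper_set :: "nat \<Rightarrow> (nat \<Rightarrow> nat \<Rightarrow> bool) \<Rightarrow> nat set \<Rightarrow> bool" where
  "upper_set n le S \<longleftrightarrow> S \<subseteq> {1..n} \<and> (\<forall>a b. a \<in> S \<longrightarrow> le a b \<longrightarrow> b \<in> S)"

end

theory Submission
  imports Defs
begin

text \<open>On a linear extension \<open>\<sigma> = p i s\<close> the map \<open>\<partial>\<^sub>i\<close> fixes \<open>p\<close> and sweeps \<open>i\<close> to the right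
  through \<open>s\<close>, exchanging the carried letter for every comparable letter it meets. In a rooted
  forest the elements above \<open>i\<close> form a chain, so \<open>|\<up>i|\<close> applications of \<open>\<partial>\<^sub>i\<close> move \<open>\<up>i\<close>,
  increasingly sorted, to the end and keep the other letters in place; as \<open>\<partial>\<^sub>j\<close> for
  \<open>j \<in> \<up>i\<close> does not change the relative order of the letters outside \<open>\<up>i\<close>, every \<open>x\<close> with
  \<open>\<partial>\<^sub>i x = x\<close> also has \<open>\<partial>\<^sub>j x = x\<close>. Hence \<open>S = I\<^sub>x\<close> is an upper set. Applying \<open>\<partial>\<^sub>s\<close>
  for \<open>s \<in> S\<close> in decreasing order gives an idempotent \<open>e\<close> with \<open>ex = x\<close> and
  \<open>\<pi>e = (\<pi> without S) u\<close> for a fixed word \<open>u\<close> on \<open>S\<close>. Its right factor \<open>w\<close> contains \<open>u\<close>, is an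
  upper set because it is a suffix of a linear extension, and \<open>\<pi>e = (\<pi> without w) w\<close>; so
  \<open>\<partial>\<^sub>j e = e\<close> for \<open>j \<in> w\<close>, i.e. \<open>w \<subseteq> I\<^sub>e \<subseteq> I\<^sub>x = S\<close>.\<close>

text \<open>\<open>bubble le c s\<close> is \<open>(c s)\<tau>\<^sub>1 \<dots> \<tau>\<^bsub>|s|\<^esub>\<close>: the carried letter moves right past
  incomparable letters and is exchanged for the first comparable one.\<close>
fun bubble :: "(nat \<Rightarrow> nat \<Rightarrow> bool) \<Rightarrow> nat \<Rightarrow> nat list \<Rightarrow> nat list" where
  "bubble le c [] = [c]"
| "bubble le c (d # ws) = (if comparable le c d then c # bubble le d ws else d # bubble le c ws)"

definition may_precede :: "(nat \<Rightarrow> nat \<Rightarrow> bool) \<Rightarrow> nat \<Rightarrow> nat \<Rightarrow> bool" where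
  "may_precede le a b \<longleftrightarrow> \<not> strict le b a"

lemma set_bubble: "set (bubble le c xs) = set (c # xs)"
  by (induction xs arbitrary: c) auto

lemma length_bubble: "length (bubble le c xs) = Suc (length xs)"
  by (induction xs arbitrary: c) auto

lemma distinct_bubble: "distinct (c # xs) \<Longrightarrow> distinct (bubble le c xs)"
  by (induction xs arbitrary: c) (auto simp: set_bubble)

lemma bubble_not_Nil: "bubble le c xs \<noteq> []"
  by (cases xs) auto

lemma comparable_may_precede_le: "comparable le c d \<Longrightarrow> may_precede le c d \<Longrightarrow> c \<noteq> d \<Longrightarrow> le c d"
  unfolding comparable_def may_precede_def strict_def by auto

lemma sorted_bubble:
  "sorted_wrt (may_precede le) (c # xs) \<Longrightarrow> sorted_wrt (may_precede le) (bubble le c xs)"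
proof (induction xs arbitrary: c)
  case Nil
  then show ?case by simp
next
  case (Cons d ws)
  show ?case
  proof (cases "comparable le c d")
    case True
    then show ?thesis using Cons by (auto simp: set_bubble)
  next
    case False
    then have "may_precede le d c" unfolding may_precede_def strict_def comparable_def by auto
    then show ?thesis using Cons False by (auto simp: set_bubble)
  qed
qed

lemma bubble_append:
  "bubble le c (xs @ ys) = butlast (bubble le c xs) @ bubble le (last (bubble le c xs)) ys"
  by (induction xs arbitrary: c) (simp_all add: bubble_not_Nil butlast_append)

lemma bubble_incomparable: "\<forall>x\<in>set xs. \<not> comparable le c x \<Longrightarrow> bubble le c xs = xs @ [c]"
  by (induction xs arbitrary: c) auto

lemma bubble_chain:
  "\<forall>x\<in>set (c # xs). \<forall>y\<in>set (c # xs). comparable le x y \<Longrightarrow> bubble le c xs = c # xs"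
  by (induction xs arbitrary: c) auto

lemma last_bubble:
  assumes trans: "\<And>a b c. le a b \<Longrightarrow> le b c \<Longrightarrow> le a c"
  shows "sorted_wrt (may_precede le) (c # xs) \<Longrightarrow> distinct (c # xs) \<Longrightarrow>
    last (bubble le c xs) = c \<or> le c (last (bubble le c xs))"
proof (induction xs arbitrary: c)
  case Nil
  then show ?case by simp
next
  case (Cons d ws)
  show ?case
  proof (cases "comparable le c d")
    case True
    then have "le c d" using Cons.prems comparable_may_precede_le by auto
    moreover have "last (bubble le d ws) = d \<or> le d (last (bubble le d ws))"
      using Cons by auto
    ultimately show ?thesis using True by (auto simp: bubble_not_Nil intro: trans)
  next
    case False
    then show ?thesis using Cons by (auto simp: bubble_not_Nil)
  qed
qed

lemma filter_bubble:
  assumes up: "\<forall>a b. a \<in> B \<longrightarrow> le a b \<longrightarrow> b \<in> B"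
  shows "c \<in> B \<Longrightarrow> sorted_wrt (may_precede le) (c # xs) \<Longrightarrow> distinct (c # xs) \<Longrightarrow>
    filter (\<lambda>x. x \<notin> B) (bubble le c xs) = filter (\<lambda>x. x \<notin> B) xs"
proof (induction xs arbitrary: c)
  case Nil
  then show ?case by simp
next
  case (Cons d ws)
  show ?case
  proof (cases "comparable le c d")
    case True
    then have "le c d" using Cons.prems comparable_may_precede_le by auto
    then have "d \<in> B" using up Cons.prems by blast
    then show ?thesis using Cons True by auto
  next
    case False
    then show ?thesis using Cons by auto
  qed
qed

lemma set_fold_bubble: "set (fold (bubble le) ss t) = set ss \<union> set t"
  by (induction ss arbitrary: t) (auto simp: set_bubble)

lemma fold_tau_eq_bubble:
  "fold (tau le) [Suc (length p) ..< Suc (length p) + length s] (p @ c # s) = p @ bubble le c s"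
proof (induction s arbitrary: p c)
  case Nil
  then show ?case by simp
next
  case (Cons d ws)
  have "[Suc (length p) ..< Suc (length p) + length (d # ws)] =
      Suc (length p) # [Suc (Suc (length p)) ..< Suc (length p) + length (d # ws)]"
    by (rule upt_conv_Cons) simp
  then have range: "[Suc (length p) ..< Suc (length p) + length (d # ws)] =
      Suc (length p) # [Suc (length (p @ [x])) ..< Suc (length (p @ [x])) + length ws]" for x
    by simp
  show ?case
  proof (cases "comparable le c d")
    case True
    have "tau le (Suc (length p)) (p @ c # d # ws) = (p @ [c]) @ d # ws"
      using True by (simp add: tau_def nth_append)
    then show ?thesis using Cons.IH[of "p @ [c]" d] True range by simp
  next
    case False
    have "tau le (Suc (length p)) (p @ c # d # ws) = (p @ [d]) @ c # ws"
      using False by (simp add: tau_def nth_append list_update_append)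
    then show ?thesis using Cons.IH[of "p @ [d]" c] False range by simp
  qed
qed

lemma posn_append_Cons: "distinct (p @ i # s) \<Longrightarrow> posn (p @ i # s) i = Suc (length p)"
proof -
  assume d: "distinct (p @ i # s)"
  have "(THE k. k < length (p @ i # s) \<and> (p @ i # s) ! k = i) = length p"
  proof (rule the_equality)
    fix k assume "k < length (p @ i # s) \<and> (p @ i # s) ! k = i"
    then show "k = length p" using nth_eq_iff_index_eq[OF d, of k "length p"] by auto
  qed simp
  then show ?thesis unfolding posn_def by simp
qed

lemma hatd_append_Cons:
  assumes "distinct (p @ i # s)" "length (p @ i # s) = n"
  shows "hatd n le i (p @ i # s) = p @ bubble le i s"
proof -
  have "n = Suc (length p) + length s" using assms by simp
  then show ?thesis
    unfolding hatd_def pd_def using posn_append_Cons[OF assms(1)] fold_tau_eq_bubble by simp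
qed

lemma funpow_in_closed_set:
  "(\<And>\<sigma>. \<sigma> \<in> A \<Longrightarrow> f \<sigma> \<in> A) \<Longrightarrow> \<sigma> \<in> A \<Longrightarrow> (f ^^ k) \<sigma> \<in> A"
  by (induction k) auto

lemma funpow_invariant:
  assumes "\<And>\<sigma>. \<sigma> \<in> A \<Longrightarrow> f \<sigma> \<in> A" "\<And>\<sigma>. \<sigma> \<in> A \<Longrightarrow> g (f \<sigma>) = g \<sigma>" "\<sigma> \<in> A"
  shows "g ((f ^^ k) \<sigma>) = g \<sigma>"
  using assms funpow_in_closed_set[of A f] by (induction k) auto

lemma fold_hatd_in_hatd_monoid:
  "f \<in> hatd_monoid n le \<Longrightarrow> set ss \<subseteq> {1..n} \<Longrightarrow>
   (\<lambda>\<sigma>. fold (hatd n le) ss (f \<sigma>)) \<in> hatd_monoid n le"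
proof (induction ss arbitrary: f)
  case Nil
  then show ?case by simp
next
  case (Cons i ss)
  then have "hatd n le i \<circ> f \<in> hatd_monoid n le" by (auto intro: hatd_monoid.stepI)
  then show ?case using Cons by (simp add: comp_def)
qed

lemma longest_common_suffix_unique:
  assumes "V \<noteq> {}"
  shows "\<exists>!w. (\<forall>v\<in>V. suffix w v) \<and> (\<forall>w'. (\<forall>v\<in>V. suffix w' v) \<longrightarrow> length w' \<le> length w)"
proof -
  obtain v0 where v0: "v0 \<in> V" using assms by blast
  let ?common = "\<lambda>w. \<forall>v\<in>V. suffix w v"
  have "\<exists>m. (\<exists>w. ?common w \<and> length w = m) \<and>
      (\<forall>k. (\<exists>w. ?common w \<and> length w = k) \<longrightarrow> k \<le> m)"
  proof (rule Nat.ex_has_greatest_nat[of _ 0 "length v0"])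
    show "\<exists>w. ?common w \<and> length w = 0" by (intro exI[of _ "[]"]) auto
    show "\<forall>k. (\<exists>w. ?common w \<and> length w = k) \<longrightarrow> k \<le> length v0"
      using v0 suffix_length_le by blast
  qed
  then obtain m where m: "\<exists>w. ?common w \<and> length w = m"
    "\<forall>k. (\<exists>w. ?common w \<and> length w = k) \<longrightarrow> k \<le> m"
    by blast
  then obtain w where w: "?common w" "length w = m" by blast
  show ?thesis
  proof (rule ex1I)
    show "?common w \<and> (\<forall>w'. ?common w' \<longrightarrow> length w' \<le> length w)" using w m by auto
  next
    fix w' assume "?common w' \<and> (\<forall>w''. ?common w'' \<longrightarrow> length w'' \<le> length w')"
    then have "length w' \<le> length w" "length w \<le> length w'" "suffix w' v0" "suffix w v0"
      using w m v0 by auto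
    then have "length w' = length w" "suffix w' v0" "suffix w v0" by simp_all
    then show "w' = w" by (metis suffix_length_suffix order_refl suffix_order.antisym)
  qed
qed

locale natural_forest =
  fixes n :: nat and le :: "nat \<Rightarrow> nat \<Rightarrow> bool"
  assumes forest: "rooted_forest n le" and natural: "natural_labeling n le"
begin

lemma le_dom: "le a b \<Longrightarrow> a \<in> {1..n} \<and> b \<in> {1..n}"
  using forest unfolding rooted_forest_def poset_on_def by blast

lemma le_refl: "a \<in> {1..n} \<Longrightarrow> le a a"
  using forest unfolding rooted_forest_def poset_on_def by blast

lemma le_trans: "le a b \<Longrightarrow> le b c \<Longrightarrow> le a c"
  using forest unfolding rooted_forest_def poset_on_def by blast

lemma strict_less: "strict le a b \<Longrightarrow> a < b"
  using natural unfolding natural_labeling_def by blast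

lemma finite_upset: "finite {k. le i k}"
  by (rule finite_subset[of _ "{1..n}"]) (auto dest: le_dom)

lemma lin_ext_iff: "\<pi> \<in> lin_ext n le \<longleftrightarrow>
  length \<pi> = n \<and> distinct \<pi> \<and> set \<pi> = {1..n} \<and> sorted_wrt (may_precede le) \<pi>"
proof
  assume \<pi>: "\<pi> \<in> lin_ext n le"
  then have "length \<pi> = n"
    and order: "\<forall>k l. k < n \<longrightarrow> l < n \<longrightarrow> strict le (\<pi> ! k) (\<pi> ! l) \<longrightarrow> k < l"
    unfolding lin_ext_def by auto
  then have "may_precede le (\<pi> ! k) (\<pi> ! l)" if "k < l" "l < length \<pi>" for k l
    using that unfolding may_precede_def by (meson less_trans not_less_iff_gr_or_eq)
  then have "sorted_wrt (may_precede le) \<pi>"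
    unfolding sorted_wrt_iff_nth_less by blast
  then show "length \<pi> = n \<and> distinct \<pi> \<and> set \<pi> = {1..n} \<and> sorted_wrt (may_precede le) \<pi>"
    using \<pi> unfolding lin_ext_def by simp
next
  assume \<pi>: "length \<pi> = n \<and> distinct \<pi> \<and> set \<pi> = {1..n} \<and> sorted_wrt (may_precede le) \<pi>"
  have "k < l" if "k < n" "l < n" "strict le (\<pi> ! k) (\<pi> ! l)" for k l
  proof (rule ccontr)
    assume "\<not> k < l"
    then consider "k = l" | "l < k" by linarith
    then show False
    proof cases
      case 1
      then show ?thesis using that unfolding strict_def by simp
    next
      case 2
      then show ?thesis using \<pi> that unfolding sorted_wrt_iff_nth_less may_precede_def by auto
    qed
  qed
  then show "\<pi> \<in> lin_ext n le" using \<pi> unfolding lin_ext_def by auto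
qed

lemma upt_in_lin_ext: "[1..<Suc n] \<in> lin_ext n le"
proof -
  have "sorted_wrt (<) [1..<Suc n]" using strict_sorted_iff sorted_upt distinct_upt by blast
  then have "sorted_wrt (may_precede le) [1..<Suc n]"
    by (rule sorted_wrt_mono_rel[rotated]) (auto simp: may_precede_def dest: strict_less)
  then show ?thesis unfolding lin_ext_iff by auto
qed

lemma hatd_lin_ext_append_Cons:
  assumes "p @ i # s \<in> lin_ext n le"
  shows "hatd n le i (p @ i # s) = p @ bubble le i s"
  using assms hatd_append_Cons lin_ext_iff by blast

lemma hatd_in_lin_ext:
  assumes \<sigma>: "\<sigma> \<in> lin_ext n le" and i: "i \<in> {1..n}"
  shows "hatd n le i \<sigma> \<in> lin_ext n le"
proof -
  have "i \<in> set \<sigma>" using assms lin_ext_iff by simp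
  then obtain p s where s: "\<sigma> = p @ i # s" by (meson split_list)
  have "sorted_wrt (may_precede le) (bubble le i s)" "distinct (bubble le i s)"
    using \<sigma> s sorted_bubble distinct_bubble by (auto simp: lin_ext_iff sorted_wrt_append)
  then show ?thesis using \<sigma> s hatd_lin_ext_append_Cons unfolding lin_ext_iff
    by (auto simp: set_bubble length_bubble sorted_wrt_append)
qed

lemma filter_hatd_upward_closed:
  assumes \<sigma>: "\<sigma> \<in> lin_ext n le" and j: "j \<in> B" "j \<in> {1..n}"
    and up: "\<forall>a b. a \<in> B \<longrightarrow> le a b \<longrightarrow> b \<in> B"
  shows "filter (\<lambda>x. x \<notin> B) (hatd n le j \<sigma>) = filter (\<lambda>x. x \<notin> B) \<sigma>"
proof -
  have "j \<in> set \<sigma>" using assms lin_ext_iff by simp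
  then obtain p s where s: "\<sigma> = p @ j # s" by (meson split_list)
  have "sorted_wrt (may_precede le) (j # s)" "distinct (j # s)"
    using \<sigma> s by (auto simp: lin_ext_iff sorted_wrt_append)
  then have "filter (\<lambda>x. x \<notin> B) (bubble le j s) = filter (\<lambda>x. x \<notin> B) s"
    using filter_bubble[OF up] j by blast
  then show ?thesis using \<sigma> s j hatd_lin_ext_append_Cons by simp
qed

lemma upper_set_suffix_lin_ext:
  assumes \<pi>: "\<pi> \<in> lin_ext n le" and w: "suffix w \<pi>"
  shows "upper_set n le (set w)"
proof -
  obtain \<alpha> where \<alpha>: "\<pi> = \<alpha> @ w" using w unfolding suffix_def by blast
  have \<pi>': "set \<pi> = {1..n}" "sorted_wrt (may_precede le) \<pi>" using \<pi> lin_ext_iff by auto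
  have "b \<in> set w" if a: "a \<in> set w" and ab: "le a b" for a b
  proof (rule ccontr)
    assume b: "b \<notin> set w"
    then have "b \<in> set \<alpha>" using \<alpha> \<pi>'(1) ab le_dom by auto
    then have "may_precede le b a" using \<pi>'(2) \<alpha> a by (auto simp: sorted_wrt_append)
    then show False using a b ab unfolding may_precede_def strict_def by blast
  qed
  moreover have "set w \<subseteq> {1..n}" using \<alpha> \<pi>'(1) by auto
  ultimately show ?thesis unfolding upper_set_def by blast
qed

lemma exists_cover_below:
  assumes "le i x" "i \<noteq> x"
  obtains c where "covers le i c" "le c x"
proof -
  let ?C = "{k. strict le i k \<and> le k x}"
  have fin: "finite ?C" by (rule finite_subset[of _ "{1..n}"]) (auto dest: le_dom)
  have "x \<in> ?C" using assms le_dom le_refl unfolding strict_def by auto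
  then have c: "Min ?C \<in> ?C" "\<forall>k\<in>?C. Min ?C \<le> k"
    using Min_in[OF fin] Min_le[OF fin] by blast+
  have "\<not> (strict le i k \<and> strict le k (Min ?C))" for k
  proof
    assume k: "strict le i k \<and> strict le k (Min ?C)"
    then have "k \<in> ?C" using c le_trans unfolding strict_def by auto
    then show False using c k strict_less by force
  qed
  then have "covers le i (Min ?C)" using c unfolding covers_def by blast
  then show thesis using that c by blast
qed

text \<open>Both elements lie above the unique cover of \<open>i\<close>, which is closer to them; this is where
  the forest hypothesis enters.\<close>
lemma upset_comparable: "le i a \<Longrightarrow> le i b \<Longrightarrow> comparable le a b"
proof (induction "a - i" arbitrary: i rule: less_induct)
  case less
  show ?case
  proof (cases "i = a \<or> i = b")
    case True
    then show ?thesis using less.prems le_dom le_refl unfolding comparable_def by blast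
  next
    case False
    obtain c where c: "covers le i c" "le c a" using exists_cover_below less.prems False by metis
    obtain c' where c': "covers le i c'" "le c' b" using exists_cover_below less.prems False by metis
    have "i \<in> {1..n}" using less.prems le_dom by blast
    then have "c' = c" using forest c c' unfolding rooted_forest_def by blast
    have "i < c" using c(1) strict_less unfolding covers_def by blast
    moreover have "c \<le> a" using c(2) strict_less unfolding strict_def by force
    ultimately have "a - c < a - i" by linarith
    then show ?thesis using less.hyps c c' \<open>c' = c\<close> by blast
  qed
qed

lemma hatd_grows_upset_suffix:
  assumes \<sigma>: "\<sigma> \<in> lin_ext n le" and i: "i \<in> {1..n}" and t: "\<sigma> = \<rho> @ t"
    and t_up: "set t \<subseteq> {k. le i k}" and t_short: "length t < card {k. le i k}"
  obtains \<rho>' c where "hatd n le i \<sigma> = \<rho>' @ c # t" "le i c"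
proof -
  have \<sigma>': "distinct \<sigma>" "set \<sigma> = {1..n}" "sorted_wrt (may_precede le) \<sigma>"
    using \<sigma> lin_ext_iff by auto
  have "i \<notin> set t"
  proof
    assume it: "i \<in> set t"
    have "{k. le i k} \<subseteq> set t"
    proof
      fix a assume a: "a \<in> {k. le i k}"
      show "a \<in> set t"
      proof (rule ccontr)
        assume "a \<notin> set t"
        then have "a \<in> set \<rho>" using a le_dom \<sigma>'(2) t by auto
        then have "may_precede le a i" using \<sigma>'(3) t it by (auto simp: sorted_wrt_append)
        then show False using a it \<open>a \<notin> set t\<close> unfolding may_precede_def strict_def by auto
      qed
    qed
    then have "card {k. le i k} \<le> card (set t)" by (simp add: card_mono)
    also have "\<dots> \<le> length t" by (rule card_length)
    finally show False using t_short by simp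
  qed
  then have "i \<in> set \<rho>" using i \<sigma>'(2) t by auto
  then obtain p s where \<rho>: "\<rho> = p @ i # s" by (meson split_list)
  define c where "c = last (bubble le i s)"
  have "sorted_wrt (may_precede le) (i # s)" "distinct (i # s)"
    using \<sigma>' t \<rho> by (auto simp: sorted_wrt_append)
  then have "c = i \<or> le i c" using last_bubble le_trans c_def by blast
  then have ic: "le i c" using le_refl i by auto
  have "\<forall>x\<in>set (c # t). \<forall>y\<in>set (c # t). comparable le x y"
  proof (intro ballI)
    fix x y assume "x \<in> set (c # t)" "y \<in> set (c # t)"
    then have "le i x" "le i y" using t_up ic by auto
    then show "comparable le x y" by (rule upset_comparable)
  qed
  then have "bubble le c t = c # t" by (rule bubble_chain)
  then have "hatd n le i \<sigma> = (p @ butlast (bubble le i s)) @ c # t"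
    using \<sigma> t \<rho> hatd_lin_ext_append_Cons[of p i "s @ t"] bubble_append c_def by simp
  then show thesis using that ic by blast
qed

lemma hatd_pow_upset_suffix:
  assumes \<sigma>: "\<sigma> \<in> lin_ext n le" and i: "i \<in> {1..n}"
  shows "k \<le> card {k. le i k} \<Longrightarrow>
    \<exists>\<rho> t. (hatd n le i ^^ k) \<sigma> = \<rho> @ t \<and> set t \<subseteq> {k. le i k} \<and> length t = k"
proof (induction k)
  case 0
  then show ?case by auto
next
  case (Suc k)
  then obtain \<rho> t where t: "(hatd n le i ^^ k) \<sigma> = \<rho> @ t" "set t \<subseteq> {k. le i k}" "length t = k"
    by auto
  have L: "(hatd n le i ^^ k) \<sigma> \<in> lin_ext n le"
    by (rule funpow_in_closed_set[OF hatd_in_lin_ext[OF _ i] \<sigma>])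
  have "length t < card {k. le i k}" using t(3) Suc.prems by simp
  then obtain \<rho>' c where "hatd n le i ((hatd n le i ^^ k) \<sigma>) = \<rho>' @ c # t" "le i c"
    by (rule hatd_grows_upset_suffix[OF L i t(1,2)])
  then show ?case using t by (intro exI[of _ \<rho>'] exI[of _ "c # t"]) auto
qed

lemma hatd_pow_card_upset:
  assumes \<sigma>: "\<sigma> \<in> lin_ext n le" and i: "i \<in> {1..n}"
  shows "(hatd n le i ^^ card {k. le i k}) \<sigma> =
    filter (\<lambda>x. x \<notin> {k. le i k}) \<sigma> @ sorted_list_of_set {k. le i k}"
proof -
  let ?A = "{k. le i k}"
  let ?\<tau> = "(hatd n le i ^^ card ?A) \<sigma>"
  obtain \<rho> t where \<tau>: "?\<tau> = \<rho> @ t" "set t \<subseteq> ?A" "length t = card ?A"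
    using hatd_pow_upset_suffix[OF \<sigma> i] by blast
  have "?\<tau> \<in> lin_ext n le" by (rule funpow_in_closed_set[OF hatd_in_lin_ext[OF _ i] \<sigma>])
  then have \<tau>': "distinct ?\<tau>" "sorted_wrt (may_precede le) ?\<tau>" using lin_ext_iff by auto
  have t: "distinct t" "set \<rho> \<inter> set t = {}" "sorted_wrt (may_precede le) t"
    using \<tau>' \<tau>(1) by (auto simp: sorted_wrt_append)
  have "card (set t) = card ?A" using distinct_card[OF t(1)] \<tau>(3) by simp
  then have tA: "set t = ?A" using card_subset_eq[OF finite_upset \<tau>(2)] by simp
  have A_up: "\<forall>a b. a \<in> ?A \<longrightarrow> le a b \<longrightarrow> b \<in> ?A" using le_trans by blast
  have "filter (\<lambda>x. x \<notin> ?A) \<sigma> = filter (\<lambda>x. x \<notin> ?A) ?\<tau>"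
  proof (rule funpow_invariant[symmetric, where A = "lin_ext n le"])
    show "hatd n le i \<pi> \<in> lin_ext n le" if "\<pi> \<in> lin_ext n le" for \<pi>
      using hatd_in_lin_ext[OF that i] .
    show "filter (\<lambda>x. x \<notin> ?A) (hatd n le i \<pi>) = filter (\<lambda>x. x \<notin> ?A) \<pi>"
      if "\<pi> \<in> lin_ext n le" for \<pi>
      using filter_hatd_upward_closed[OF that _ i A_up] le_refl[OF i] by simp
  qed (rule \<sigma>)
  also have "\<dots> = \<rho>" using \<tau>(1) tA t(2) by (auto intro: filter_True)
  finally have \<rho>: "filter (\<lambda>x. x \<notin> ?A) \<sigma> = \<rho>" .
  have "sorted_wrt (<) t"
    unfolding sorted_wrt_iff_nth_less
  proof (intro allI impI)
    fix k l assume kl: "k < l" "l < length t"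
    have "t ! k \<in> ?A" "t ! l \<in> ?A" using kl tA nth_mem by (metis order.strict_trans)+
    then have "comparable le (t ! k) (t ! l)" using upset_comparable by simp
    moreover have "may_precede le (t ! k) (t ! l)" using t(3) kl by (simp add: sorted_wrt_iff_nth_less)
    moreover have "t ! k \<noteq> t ! l" using t(1) kl nth_eq_iff_index_eq by fastforce
    ultimately show "t ! k < t ! l"
      using comparable_may_precede_le strict_less unfolding strict_def by blast
  qed
  then have "t = sorted_list_of_set ?A"
    using sorted_distinct_set_unique[of t "sorted_list_of_set ?A"] tA finite_upset
    by (simp add: strict_sorted_iff)
  then show ?thesis using \<tau>(1) \<rho> by simp
qed

text \<open>\<open>\<partial>\<^sub>i\<^bsup>|\<up>i|\<^esup>\<close> absorbs every \<open>\<partial>\<^sub>j\<close> with \<open>j \<in> \<up>i\<close>.\<close>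
lemma I_set_upward_closed:
  assumes i: "i \<in> I_set n le x" and ij: "le i j"
  shows "j \<in> I_set n le x"
proof -
  let ?A = "{k. le i k}"
  let ?y = "hatd n le i ^^ card ?A"
  have i: "i \<in> {1..n}" "\<forall>\<pi>\<in>lin_ext n le. x (hatd n le i \<pi>) = x \<pi>"
    using i unfolding I_set_def by auto
  have j: "j \<in> {1..n}" using ij le_dom by blast
  have xy: "x (?y \<pi>) = x \<pi>" if "\<pi> \<in> lin_ext n le" for \<pi>
    by (rule funpow_invariant[where A = "lin_ext n le"]) (use hatd_in_lin_ext i that in auto)
  have A_up: "\<forall>a b. a \<in> ?A \<longrightarrow> le a b \<longrightarrow> b \<in> ?A" using le_trans by blast
  have "x (hatd n le j \<pi>) = x \<pi>" if \<pi>: "\<pi> \<in> lin_ext n le" for \<pi>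
  proof -
    have j\<pi>: "hatd n le j \<pi> \<in> lin_ext n le" using hatd_in_lin_ext \<pi> j by blast
    have "x (hatd n le j \<pi>) = x (?y (hatd n le j \<pi>))" using xy[OF j\<pi>] by simp
    also have "?y (hatd n le j \<pi>) = filter (\<lambda>x. x \<notin> ?A) (hatd n le j \<pi>) @ sorted_list_of_set ?A"
      using hatd_pow_card_upset[OF j\<pi> i(1)] .
    also have "filter (\<lambda>x. x \<notin> ?A) (hatd n le j \<pi>) = filter (\<lambda>x. x \<notin> ?A) \<pi>"
      using filter_hatd_upward_closed[OF \<pi> _ j A_up] ij by simp
    also have "filter (\<lambda>x. x \<notin> ?A) \<pi> @ sorted_list_of_set ?A = ?y \<pi>"
      using hatd_pow_card_upset[OF \<pi> i(1)] by simp
    also have "x (?y \<pi>) = x \<pi>" using xy[OF \<pi>] .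
    finally show ?thesis .
  qed
  then show ?thesis using j unfolding I_set_def by blast
qed

lemma upper_set_I_set: "upper_set n le (I_set n le x)"
  using I_set_upward_closed unfolding upper_set_def I_set_def by blast

text \<open>The letters of \<open>\<rho>\<close> after \<open>i\<close> are incomparable to \<open>i\<close>: those below \<open>i\<close> precede it, those
  above lie in \<open>t\<close>. So \<open>\<partial>\<^sub>i\<close> carries \<open>i\<close> unchanged to the start of \<open>t\<close>.\<close>
lemma hatd_remove_to_suffix:
  assumes \<sigma>: "\<sigma> \<in> lin_ext n le" and t: "\<sigma> = \<rho> @ t" and i: "i \<in> {1..n}" "i \<notin> set t"
    and above_i: "\<forall>a. strict le i a \<longrightarrow> a \<in> set t"
  shows "hatd n le i \<sigma> = filter (\<lambda>x. x \<noteq> i) \<rho> @ bubble le i t"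
proof -
  have \<sigma>': "distinct \<sigma>" "set \<sigma> = {1..n}" "sorted_wrt (may_precede le) \<sigma>"
    using \<sigma> lin_ext_iff by auto
  then have "i \<in> set \<rho>" using i t by auto
  then obtain p s where \<rho>: "\<rho> = p @ i # s" by (meson split_list)
  have "\<not> comparable le i y" if y: "y \<in> set s" for y
  proof
    assume "comparable le i y"
    moreover have "may_precede le i y" "i \<noteq> y" "y \<notin> set t"
      using \<sigma>' t \<rho> y by (auto simp: sorted_wrt_append)
    ultimately show False using comparable_may_precede_le above_i unfolding strict_def by blast
  qed
  then have "bubble le i s = s @ [i]" using bubble_incomparable by blast
  then have "hatd n le i \<sigma> = (p @ s) @ bubble le i t"
    using \<sigma> t \<rho> hatd_lin_ext_append_Cons[of p i "s @ t"] bubble_append by simp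
  moreover have "filter (\<lambda>x. x \<noteq> i) \<rho> = p @ s"
  proof -
    have "i \<notin> set p" "i \<notin> set s" using \<sigma>'(1) t \<rho> by auto
    then have "filter (\<lambda>x. x \<noteq> i) p = p" "filter (\<lambda>x. x \<noteq> i) s = s"
      by (auto intro: filter_True)
    then show ?thesis using \<rho> by simp
  qed
  ultimately show ?thesis by simp
qed

lemma fold_hatd_decreasing:
  "\<sigma> \<in> lin_ext n le \<Longrightarrow> \<sigma> = \<rho> @ t \<Longrightarrow> set ss \<subseteq> {1..n} \<Longrightarrow> set ss \<inter> set t = {} \<Longrightarrow>
   sorted_wrt (>) ss \<Longrightarrow> \<forall>i\<in>set ss. \<forall>a. strict le i a \<longrightarrow> a \<in> set t \<or> a \<in> set ss \<Longrightarrow>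
   fold (hatd n le) ss \<sigma> = filter (\<lambda>x. x \<notin> set ss) \<rho> @ fold (bubble le) ss t"
proof (induction ss arbitrary: \<sigma> \<rho> t)
  case Nil
  then show ?case by simp
next
  case (Cons i ss)
  have i: "i \<in> {1..n}" "i \<notin> set t" using Cons.prems by auto
  have "a \<in> set t" if "strict le i a" for a
    using Cons.prems(5,6) that strict_less[OF that] by force
  then have \<sigma>': "hatd n le i \<sigma> = filter (\<lambda>x. x \<noteq> i) \<rho> @ bubble le i t"
    using hatd_remove_to_suffix[OF Cons.prems(1,2) i] by blast
  have "fold (hatd n le) ss (hatd n le i \<sigma>) =
      filter (\<lambda>x. x \<notin> set ss) (filter (\<lambda>x. x \<noteq> i) \<rho>) @ fold (bubble le) ss (bubble le i t)"
    by (rule Cons.IH[OF hatd_in_lin_ext[OF Cons.prems(1) i(1)] \<sigma>'])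
      (use Cons.prems in \<open>auto simp: set_bubble\<close>)
  then show ?case by (simp add: conj_commute)
qed

end

definition hatd_sweep :: "nat \<Rightarrow> (nat \<Rightarrow> nat \<Rightarrow> bool) \<Rightarrow> nat set \<Rightarrow> nat list \<Rightarrow> nat list" where
  "hatd_sweep n le S \<sigma> = fold (hatd n le) (rev (sorted_list_of_set S)) \<sigma>"

definition sweep_word :: "(nat \<Rightarrow> nat \<Rightarrow> bool) \<Rightarrow> nat set \<Rightarrow> nat list" where
  "sweep_word le S = fold (bubble le) (rev (sorted_list_of_set S)) []"

lemma set_sweep_word: "finite S \<Longrightarrow> set (sweep_word le S) = S"
  unfolding sweep_word_def by (simp add: set_fold_bubble)

lemma hatd_sweep_in_hatd_monoid:
  assumes "S \<subseteq> {1..n}"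
  shows "hatd_sweep n le S \<in> hatd_monoid n le"
proof -
  let ?ss = "rev (sorted_list_of_set S)"
  have "set ?ss \<subseteq> {1..n}" using assms finite_subset[OF assms] by simp
  moreover have "hatd_sweep n le S = (\<lambda>\<sigma>. fold (hatd n le) ?ss (id \<sigma>))"
    by (simp add: fun_eq_iff hatd_sweep_def)
  ultimately show ?thesis using fold_hatd_in_hatd_monoid[OF hatd_monoid.idI] by simp
qed

context natural_forest
begin

lemma hatd_sweep_in_lin_ext:
  "S \<subseteq> {1..n} \<Longrightarrow> \<sigma> \<in> lin_ext n le \<Longrightarrow> hatd_sweep n le S \<sigma> \<in> lin_ext n le"
proof -
  have "set ss \<subseteq> {1..n} \<Longrightarrow> \<sigma> \<in> lin_ext n le \<Longrightarrow> fold (hatd n le) ss \<sigma> \<in> lin_ext n le" for ss \<sigma>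
    by (induction ss arbitrary: \<sigma>) (auto simp: hatd_in_lin_ext)
  moreover assume "S \<subseteq> {1..n}" "\<sigma> \<in> lin_ext n le"
  ultimately show ?thesis using finite_subset[of S "{1..n}"] unfolding hatd_sweep_def by simp
qed

lemma hatd_sweep_eq:
  assumes S: "upper_set n le S" and \<sigma>: "\<sigma> \<in> lin_ext n le"
  shows "hatd_sweep n le S \<sigma> = filter (\<lambda>x. x \<notin> S) \<sigma> @ sweep_word le S"
proof -
  let ?ss = "rev (sorted_list_of_set S)"
  have ss: "set ?ss = S" using S finite_subset unfolding upper_set_def by fastforce
  have "sorted_wrt (>) ?ss" by (simp add: sorted_wrt_rev)
  moreover have "\<forall>i\<in>set ?ss. \<forall>a. strict le i a \<longrightarrow> a \<in> set [] \<or> a \<in> set ?ss"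
    using S ss unfolding upper_set_def strict_def by auto
  moreover have "set ?ss \<subseteq> {1..n}" using S ss unfolding upper_set_def by simp
  ultimately have "fold (hatd n le) ?ss \<sigma> = filter (\<lambda>x. x \<notin> set ?ss) \<sigma> @ fold (bubble le) ?ss []"
    using fold_hatd_decreasing[OF \<sigma>, of \<sigma> "[]" ?ss] by simp
  then show ?thesis unfolding hatd_sweep_def sweep_word_def ss .
qed

lemma idempotent_hatd_sweep:
  assumes S: "upper_set n le S"
  shows "idempotent_on (lin_ext n le) (hatd_sweep n le S)"
  unfolding idempotent_on_def
proof
  fix \<sigma> assume \<sigma>: "\<sigma> \<in> lin_ext n le"
  have S_dom: "S \<subseteq> {1..n}" using S unfolding upper_set_def by blast
  have "filter (\<lambda>x. x \<notin> S) (sweep_word le S) = []"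
    using set_sweep_word[OF finite_subset[OF S_dom]] by (simp add: filter_empty_conv)
  then have "filter (\<lambda>x. x \<notin> S) (hatd_sweep n le S \<sigma>) = filter (\<lambda>x. x \<notin> S) \<sigma>"
    using hatd_sweep_eq[OF S \<sigma>] by simp
  then show "hatd_sweep n le S (hatd_sweep n le S \<sigma>) = hatd_sweep n le S \<sigma>"
    using hatd_sweep_eq[OF S \<sigma>] hatd_sweep_eq[OF S hatd_sweep_in_lin_ext[OF S_dom \<sigma>]] by simp
qed

lemma hatd_sweep_invariant:
  assumes S: "S \<subseteq> I_set n le x" and \<sigma>: "\<sigma> \<in> lin_ext n le"
  shows "x (hatd_sweep n le S \<sigma>) = x \<sigma>"
proof -
  have "x (fold (hatd n le) ss \<sigma>) = x \<sigma>" if "set ss \<subseteq> I_set n le x" "\<sigma> \<in> lin_ext n le"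
    for ss \<sigma>
    using that
  proof (induction ss arbitrary: \<sigma>)
    case Nil
    then show ?case by simp
  next
    case (Cons i ss)
    have "i \<in> I_set n le x" and ss: "set ss \<subseteq> I_set n le x" using Cons.prems(1) by auto
    then have i: "i \<in> {1..n}" "x (hatd n le i \<sigma>) = x \<sigma>"
      using Cons.prems(2) unfolding I_set_def by blast+
    have "x (fold (hatd n le) ss (hatd n le i \<sigma>)) = x (hatd n le i \<sigma>)"
      by (rule Cons.IH[OF ss hatd_in_lin_ext[OF Cons.prems(2) i(1)]])
    then show ?case using i(2) by simp
  qed
  moreover have "S \<subseteq> {1..n}" using S unfolding I_set_def by auto
  then have "finite S" using finite_subset by blast
  then have "set (rev (sorted_list_of_set S)) \<subseteq> I_set n le x" using S by simp
  ultimately show ?thesis using \<sigma> unfolding hatd_sweep_def by blast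
qed

lemma rfactor_spec:
  "(\<forall>\<sigma>\<in>lin_ext n le. suffix (rfactor n le f) (f \<sigma>)) \<and>
   (\<forall>w. (\<forall>\<sigma>\<in>lin_ext n le. suffix w (f \<sigma>)) \<longrightarrow> length w \<le> length (rfactor n le f))"
proof -
  have "im n le f \<noteq> {}" using upt_in_lin_ext unfolding im_def by blast
  from theI'[OF longest_common_suffix_unique[OF this]] show ?thesis
    unfolding rfactor_def im_def by simp
qed

lemma rfactor_of_filter_append:
  assumes f: "\<forall>\<sigma>\<in>lin_ext n le. f \<sigma> = filter (\<lambda>x. x \<notin> set u) \<sigma> @ u"
    and f_lin_ext: "\<forall>\<sigma>\<in>lin_ext n le. f \<sigma> \<in> lin_ext n le"
  shows "set u \<subseteq> Rfactor n le f"
    and "\<forall>\<sigma>\<in>lin_ext n le. f \<sigma> = filter (\<lambda>x. x \<notin> Rfactor n le f) \<sigma> @ rfactor n le f"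
proof -
  let ?w = "rfactor n le f"
  let ?\<sigma>\<^sub>0 = "[1..<Suc n]"
  have u: "suffix u (f \<sigma>)" if "\<sigma> \<in> lin_ext n le" for \<sigma> using f that by (auto simp: suffix_def)
  have w: "suffix ?w (f \<sigma>)" if "\<sigma> \<in> lin_ext n le" for \<sigma> using rfactor_spec that by blast
  have "length u \<le> length ?w" using rfactor_spec u by blast
  then have "suffix u ?w"
    using suffix_length_suffix[OF u[OF upt_in_lin_ext] w[OF upt_in_lin_ext]] by blast
  then show uw: "set u \<subseteq> Rfactor n le f" unfolding Rfactor_def by (rule set_mono_suffix)
  show "\<forall>\<sigma>\<in>lin_ext n le. f \<sigma> = filter (\<lambda>x. x \<notin> Rfactor n le f) \<sigma> @ ?w"
  proof
    fix \<sigma> assume \<sigma>: "\<sigma> \<in> lin_ext n le"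
    obtain \<alpha> where \<alpha>: "f \<sigma> = \<alpha> @ ?w" using w[OF \<sigma>] unfolding suffix_def by blast
    have "distinct (f \<sigma>)" using f_lin_ext \<sigma> lin_ext_iff by blast
    then have "filter (\<lambda>x. x \<notin> set ?w) (f \<sigma>) = \<alpha>" using \<alpha> by (auto intro: filter_True)
    moreover have "filter (\<lambda>x. x \<notin> set ?w) (f \<sigma>) = filter (\<lambda>x. x \<notin> set ?w) \<sigma>"
    proof -
      have "filter (\<lambda>x. x \<notin> set ?w) u = []"
        using uw unfolding Rfactor_def by (auto simp: filter_empty_conv)
      moreover have "filter (\<lambda>x. x \<notin> set u \<and> x \<notin> set ?w) \<sigma> = filter (\<lambda>x. x \<notin> set ?w) \<sigma>"
        using uw unfolding Rfactor_def by (auto intro: filter_cong)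
      ultimately show ?thesis using f \<sigma> by simp
    qed
    ultimately show "f \<sigma> = filter (\<lambda>x. x \<notin> Rfactor n le f) \<sigma> @ ?w"
      using \<alpha> unfolding Rfactor_def by simp
  qed
qed

lemma I_set_antimono:
  assumes "\<forall>\<sigma>\<in>lin_ext n le. x (e \<sigma>) = x \<sigma>"
  shows "I_set n le e \<subseteq> I_set n le x"
proof
  fix j assume "j \<in> I_set n le e"
  then have j: "j \<in> {1..n}" "\<forall>\<pi>\<in>lin_ext n le. e (hatd n le j \<pi>) = e \<pi>"
    unfolding I_set_def by blast+
  have "x (hatd n le j \<pi>) = x \<pi>" if \<pi>: "\<pi> \<in> lin_ext n le" for \<pi>
  proof -
    have "x (hatd n le j \<pi>) = x (e (hatd n le j \<pi>))"
      using assms hatd_in_lin_ext[OF \<pi> j(1)] by simp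
    also have "\<dots> = x \<pi>" using assms j(2) \<pi> by simp
    finally show ?thesis .
  qed
  then show "j \<in> I_set n le x" using j(1) unfolding I_set_def by blast
qed

lemma subset_I_set_filter_append:
  assumes e: "\<forall>\<sigma>\<in>lin_ext n le. e \<sigma> = filter (\<lambda>x. x \<notin> set w) \<sigma> @ w"
    and w: "upper_set n le (set w)"
  shows "set w \<subseteq> I_set n le e"
proof
  fix j assume j: "j \<in> set w"
  then have j': "j \<in> {1..n}" using w unfolding upper_set_def by blast
  have "e (hatd n le j \<sigma>) = e \<sigma>" if \<sigma>: "\<sigma> \<in> lin_ext n le" for \<sigma>
    using e \<sigma> hatd_in_lin_ext[OF \<sigma> j'] filter_hatd_upward_closed[OF \<sigma> j j'] w
    unfolding upper_set_def by simp
  then show "j \<in> I_set n le e" using j' unfolding I_set_def by blast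
qed

end

theorem lemma6p8:
  fixes n :: nat and le :: "nat \<Rightarrow> nat \<Rightarrow> bool" and x :: "nat list \<Rightarrow> nat list"
  assumes "rooted_forest n le"
    and "natural_labeling n le"
    and "x \<in> hatd_monoid n le"
  shows "upper_set n le (I_set n le x) \<and>
         (\<exists>e\<in>hatd_monoid n le. idempotent_on (lin_ext n le) e \<and> I_set n le x = Rfactor n le e)"
proof -
  interpret natural_forest n le using assms(1,2) by unfold_locales
  let ?L = "lin_ext n le"
  define S where "S = I_set n le x"
  define e where "e = hatd_sweep n le S"
  have S: "upper_set n le S" unfolding S_def by (rule upper_set_I_set)
  then have S_dom: "S \<subseteq> {1..n}" unfolding upper_set_def by blast
  have e_lin_ext: "\<forall>\<sigma>\<in>?L. e \<sigma> \<in> ?L" using hatd_sweep_in_lin_ext S_dom e_def by blast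
  have "\<forall>\<sigma>\<in>?L. e \<sigma> = filter (\<lambda>a. a \<notin> set (sweep_word le S)) \<sigma> @ sweep_word le S"
    using hatd_sweep_eq[OF S] set_sweep_word finite_subset[OF S_dom] e_def by simp
  note rfactor = rfactor_of_filter_append[OF this e_lin_ext]
  have S_Rfactor: "S \<subseteq> Rfactor n le e"
    using rfactor(1) set_sweep_word finite_subset[OF S_dom] by simp
  have "suffix (rfactor n le e) (e [1..<Suc n])" using rfactor_spec upt_in_lin_ext by blast
  then have "upper_set n le (Rfactor n le e)"
    unfolding Rfactor_def using upper_set_suffix_lin_ext e_lin_ext upt_in_lin_ext by blast
  then have Rfactor_I_e: "Rfactor n le e \<subseteq> I_set n le e"
    using subset_I_set_filter_append rfactor(2) unfolding Rfactor_def by blast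
  have "\<forall>\<sigma>\<in>?L. x (e \<sigma>) = x \<sigma>" using hatd_sweep_invariant S_def e_def by blast
  then have "I_set n le e \<subseteq> S" using I_set_antimono S_def by blast
  then have "S = Rfactor n le e" using S_Rfactor Rfactor_I_e by blast
  moreover have "e \<in> hatd_monoid n le" "idempotent_on ?L e"
    using hatd_sweep_in_hatd_monoid[OF S_dom] idempotent_hatd_sweep[OF S] e_def by simp_all
  ultimately show ?thesis using S unfolding S_def by blast
qed

end
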